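(* Let $L_1:\Delta_K\times\mathcal{Y}\to\mathbb{R}_+$ be a level-1 loss function satisfying, for every $Q\in\Delta_K^{(2)}$ and every $y\in\mathcal{Y}$, $$L_1\big(\mathbb{E}_{\theta\sim Q}\,\theta,\;y\big)\;\le\;\mathbb{E}_{\theta\sim Q}\,L_1(\theta,y)$$ (for example, any loss that is convex in its first argument, such as the Brier score or the log-loss). Then the level-2 loss $$L_2(Q,y)\;=\;\mathbb{E}_{\theta\sim Q}\,L_1(\theta,y),\qquad Q\in\Delta_K^{(2)},\ y\in\mathcal{Y},$$ is not appropriate. In fact, for every sample size $N$ and every sample $y^{(1)},\dots,y^{(N)}$, an empirical loss minimiser of $\sum_{n=1}^N L_2(Q,y^{(n)})$ over $Q\in\Delta_K^{(2)}$ is attained by a Dirac measure $\delta_{\tilde\theta}$ for some $\tilde\theta\in\Delta_K$.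
   Context: $\mathcal{Y}=\{y_1,\dots,y_K\}$ is a finite label set, $\Delta_K=\{\theta\in[0,1]^K:\|\theta\|_1=1\}$ is the probability simplex identified with the set of probability distributions on $\mathcal{Y}$ (with $\theta(y)=\theta_k$ if $y=y_k$), and $\Delta_K^{(2)}$ denotes the set of probability distributions on $\Delta_K$ ("level-2 distributions"). $\delta_\theta$ denotes the Dirac measure at $\theta\in\Delta_K$. Definition (appropriate level-2 loss). Let $U:\Delta_K^{(2)}\to\mathbb{R}$ be an uncertainty measure, assumed non-constant, maximal at the uniform distribution on $\Delta_K$ and minimal (with a common value) at all Dirac measures. A level-2 loss $L_2:\Delta_K^{(2)}\times\mathcal{Y}\to\mathbb{R}$ is called appropriate if for every ground truth $\theta^*\in\Delta_K$ and every i.i.d. sequence $y^{(1)},y^{(2)},\dots$ with $y^{(i)}\sim\theta^*$, the empirical loss minimiser $Q^{(N)}=\operatorname{argmin}_{Q\in\Delta_K^{(2)}}\sum_{n=1}^N L_2(Q,y^{(n)})$ satisfies: (A1) for every $N$, $\mathbb{E}_{y^{(1:N)}}\big[U(Q^{(N)})\big]\ge\mathbb{E}_{y^{(1:N+1)}}\big[U(Q^{(N+1)})\big]$, and there exist $\tilde N$ and $k$ with $\mathbb{E}_{y^{(1:\tilde N)}}\big[U(Q^{(\tilde N)})\big]>\mathbb{E}_{y^{(1:\tilde N+k)}}\big[U(Q^{(\tilde N+k)})\big]$; (A2) $Q^{(N)}\to\delta_{\theta^*}$ in probability as $N\to\infty$. *)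

theory Defs
  imports "HOL-Probability.Probability"
begin

text \<open>Labels: a finite type 'y (the label set Y, K = CARD('y)).
  Level-1 predictions theta are vectors in real^'y; theta $ y is theta(y).\<close>

definition prob_simplex :: "(real^'y::finite) set" where
  "prob_simplex = {\<theta>. (\<forall>y. 0 \<le> \<theta> $ y) \<and> (\<Sum>y\<in>UNIV. \<theta> $ y) = 1}"

definition prob_simplex_space :: "(real^'y::finite) measure" where
  "prob_simplex_space = restrict_space borel prob_simplex"

definition level2 :: "(real^'y::finite) measure \<Rightarrow> bool" where
  "level2 Q \<longleftrightarrow> prob_space Q \<and> sets Q = sets prob_simplex_space"

definition dirac :: "real^'y::finite \<Rightarrow> (real^'y) measure" where
  "dirac \<theta> = return prob_simplex_space \<theta>"

definition mean2 :: "(real^'y::finite) measure \<Rightarrow> real^'y" where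
  "mean2 Q = integral\<^sup>L Q (\<lambda>\<theta>. \<theta>)"

text \<open>The level-2 loss L2(Q,y) = E_{theta ~ Q} L1(theta,y) (nonnegative integral,
  always defined since L1 is nonnegative).\<close>
definition L2_of :: "(real^'y::finite \<Rightarrow> 'y \<Rightarrow> real) \<Rightarrow> (real^'y) measure \<Rightarrow> 'y \<Rightarrow> ennreal" where
  "L2_of L1 Q y = (\<integral>\<^sup>+ \<theta>. ennreal (L1 \<theta> y) \<partial>Q)"

definition emp_loss :: "((real^'y::finite) measure \<Rightarrow> 'y \<Rightarrow> ennreal) \<Rightarrow> (real^'y) measure \<Rightarrow> 'y list \<Rightarrow> ennreal" where
  "emp_loss L2 Q ys = (\<Sum>n<length ys. L2 Q (ys ! n))"

definition is_minimiser :: "((real^'y::finite) measure \<Rightarrow> 'y \<Rightarrow> ennreal) \<Rightarrow> 'y list \<Rightarrow> (real^'y) measure \<Rightarrow> bool" where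
  "is_minimiser L2 ys Q \<longleftrightarrow> level2 Q \<and> (\<forall>Q'. level2 Q' \<longrightarrow> emp_loss L2 Q ys \<le> emp_loss L2 Q' ys)"

definition sample_prob :: "real^'y::finite \<Rightarrow> 'y list \<Rightarrow> real" where
  "sample_prob \<theta> ys = (\<Prod>y\<leftarrow>ys. \<theta> $ y)"

definition sample_exp :: "real^'y::finite \<Rightarrow> nat \<Rightarrow> ('y list \<Rightarrow> real) \<Rightarrow> real" where
  "sample_exp \<theta> N f = (\<Sum>ys\<in>{ys. length ys = N}. sample_prob \<theta> ys * f ys)"

text \<open>Uniform distribution on the prob_simplex: normalised (K-1)-dimensional Lebesgue measure
  on the prob_simplex, obtained as the radial projection x / (sum x) of the uniform
  distribution on the solid cone {x > 0, sum x \<le> 1} over the prob_simplex.\<close>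
definition unif_prob_simplex :: "(real^'y::finite) measure" where
  "unif_prob_simplex = distr (uniform_measure lborel {x. (\<forall>y. 0 < x $ y) \<and> (\<Sum>y\<in>UNIV. x $ y) \<le> 1})
                        prob_simplex_space (\<lambda>x. (1 / (\<Sum>y\<in>UNIV. x $ y)) *\<^sub>R x)"

definition uncertainty_measure :: "((real^'y::finite) measure \<Rightarrow> real) \<Rightarrow> bool" where
  "uncertainty_measure U \<longleftrightarrow>
     (\<exists>Q1 Q2. level2 Q1 \<and> level2 Q2 \<and> U Q1 \<noteq> U Q2) \<and>
     (\<forall>Q. level2 Q \<longrightarrow> U Q \<le> U unif_prob_simplex) \<and>
     (\<exists>c. (\<forall>\<theta>\<in>prob_simplex. U (dirac \<theta>) = c) \<and> (\<forall>Q. level2 Q \<longrightarrow> c \<le> U Q))"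

definition cond_A1 :: "((real^'y::finite) measure \<Rightarrow> real) \<Rightarrow> real^'y \<Rightarrow> ('y list \<Rightarrow> (real^'y) measure) \<Rightarrow> bool" where
  "cond_A1 U \<theta> sel \<longleftrightarrow>
     (\<forall>N\<ge>1. sample_exp \<theta> N (\<lambda>ys. U (sel ys)) \<ge> sample_exp \<theta> (N+1) (\<lambda>ys. U (sel ys))) \<and>
     (\<exists>Nt\<ge>1. \<exists>k. sample_exp \<theta> Nt (\<lambda>ys. U (sel ys)) > sample_exp \<theta> (Nt+k) (\<lambda>ys. U (sel ys)))"

text \<open>(A2): Q(N) \<rightarrow> Dirac(theta) in probability, w.r.t. the Levy-Prokhorov metric
  (distance of Q to a Dirac at theta is \<le> eps iff Q{dist . theta \<ge> eps} \<le> eps, up to boundary).\<close>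
definition cond_A2 :: "real^'y::finite \<Rightarrow> ('y list \<Rightarrow> (real^'y) measure) \<Rightarrow> bool" where
  "cond_A2 \<theta> sel \<longleftrightarrow>
     (\<forall>\<epsilon>>0. (\<lambda>N. sample_exp \<theta> N (\<lambda>ys. if measure (sel ys) {\<theta>'\<in>prob_simplex. dist \<theta>' \<theta> \<ge> \<epsilon>} > \<epsilon>
                                          then 1 else 0)) \<longlonglongrightarrow> 0)"

definition appropriate :: "((real^'y::finite) measure \<Rightarrow> real) \<Rightarrow> ((real^'y) measure \<Rightarrow> 'y \<Rightarrow> ennreal) \<Rightarrow> bool" where
  "appropriate U L2 \<longleftrightarrow>
     (\<forall>ys. \<exists>Q. is_minimiser L2 ys Q) \<and>
     (\<forall>sel. (\<forall>ys. is_minimiser L2 ys (sel ys)) \<longrightarrow>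
        (\<forall>\<theta>\<in>prob_simplex. cond_A1 U \<theta> sel \<and> cond_A2 \<theta> sel))"

end

theory Submission
  imports Defs
begin

text \<open>By the Jensen-type hypothesis, moving all the mass of a level-2 distribution Q to its
  mean never increases the level-2 loss of any label, so every empirical minimiser can be
  replaced by a Dirac measure. Selecting such a Dirac minimiser for every sample makes the
  uncertainty U constant along the selection (U takes a common value on Dirac measures),
  so its expectation over the samples cannot strictly decrease with N, and (A1) fails.\<close>

lemma space_prob_simplex_space: "space prob_simplex_space = prob_simplex"
  unfolding prob_simplex_space_def by (simp add: space_restrict_space)

lemma axis_in_prob_simplex: "axis i 1 \<in> prob_simplex"
  unfolding prob_simplex_def axis_def by (auto simp: if_distrib sum.delta)

lemma level2_dirac: "\<theta> \<in> prob_simplex \<Longrightarrow> level2 (dirac \<theta>)"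
  unfolding level2_def dirac_def
  by (auto simp: space_prob_simplex_space intro!: prob_space_return)

lemma mean2_in_prob_simplex:
  fixes Q :: "(real^'y::finite) measure"
  assumes "level2 Q"
  shows "mean2 Q \<in> prob_simplex"
proof -
  interpret prob_space Q using assms unfolding level2_def by auto
  have sets_Q: "sets Q = sets prob_simplex_space" using assms unfolding level2_def by auto
  have space_Q: "space Q = prob_simplex"
    using sets_eq_imp_space_eq[OF sets_Q] space_prob_simplex_space by simp
  have "(\<lambda>\<theta>. \<theta>) \<in> borel_measurable Q"
    using measurable_cong_sets[OF sets_Q refl] unfolding prob_simplex_space_def
    by (metis measurable_ident_sets measurable_restrict_space1 sets_restrict_space measurable_id)
  moreover have "AE \<theta> in Q. norm \<theta> \<le> 1"
  proof (rule AE_I2)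
    fix \<theta> assume "\<theta> \<in> space Q"
    then have \<theta>: "\<theta> \<in> prob_simplex" using space_Q by simp
    have "norm \<theta> \<le> (\<Sum>i\<in>UNIV. \<bar>\<theta> $ i\<bar>)" by (rule norm_le_l1_cart)
    also have "\<dots> = 1" using \<theta> unfolding prob_simplex_def by simp
    finally show "norm \<theta> \<le> 1" .
  qed
  ultimately have int: "integrable Q (\<lambda>\<theta>. \<theta>)" by (rule integrable_const_bound[rotated])
  have int_nth: "integrable Q (\<lambda>\<theta>. \<theta> $ i)" for i
    using integrable_bounded_linear[OF bounded_linear_vec_nth int] by simp
  have mean2_nth: "mean2 Q $ i = (\<integral>\<theta>. \<theta> $ i \<partial>Q)" for i
    unfolding mean2_def using integral_bounded_linear[OF bounded_linear_vec_nth int] by simp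
  have "0 \<le> mean2 Q $ i" for i
    unfolding mean2_nth
    by (rule integral_nonneg_AE, rule AE_I2) (auto simp: space_Q prob_simplex_def)
  moreover have "(\<Sum>i\<in>UNIV. mean2 Q $ i) = 1"
  proof -
    have "(\<Sum>i\<in>UNIV. mean2 Q $ i) = (\<integral>\<theta>. (\<Sum>i\<in>UNIV. \<theta> $ i) \<partial>Q)"
      unfolding mean2_nth by (simp add: Bochner_Integration.integral_sum int_nth)
    also have "\<dots> = (\<integral>\<theta>. 1 \<partial>Q)"
      by (rule Bochner_Integration.integral_cong) (auto simp: space_Q prob_simplex_def)
    finally show ?thesis by (simp add: prob_space)
  qed
  ultimately show ?thesis unfolding prob_simplex_def by auto
qed

text \<open>Nothing is known about the measurability of L1, so the integral against the Dirac
  measure is bounded through a measurable majorant that is infinite off the point.\<close>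

lemma L2_of_dirac_le:
  fixes L1 :: "real^'y::finite \<Rightarrow> 'y \<Rightarrow> real"
  assumes "\<theta> \<in> prob_simplex"
  shows "L2_of L1 (dirac \<theta>) y \<le> ennreal (L1 \<theta> y)"
proof -
  define h where "h x = (if x \<in> {\<theta>} then ennreal (L1 \<theta> y) else top)" for x
  have "{\<theta>} \<in> sets prob_simplex_space"
    unfolding prob_simplex_space_def using assms
    by (auto simp: sets_restrict_space image_iff intro!: bexI[of _ "{\<theta>}"])
  then have "h \<in> borel_measurable prob_simplex_space"
    unfolding h_def by (intro measurable_If_set) auto
  have "L2_of L1 (dirac \<theta>) y \<le> (\<integral>\<^sup>+ x. h x \<partial>dirac \<theta>)"
    unfolding L2_of_def by (rule nn_integral_mono) (auto simp: h_def)
  also have "\<dots> = h \<theta>"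
    unfolding dirac_def
    using assms \<open>h \<in> borel_measurable prob_simplex_space\<close>
    by (intro nn_integral_return) (auto simp: space_prob_simplex_space)
  finally show ?thesis by (simp add: h_def)
qed

lemma is_minimiser_dirac_mean2:
  fixes L1 :: "real^'y::finite \<Rightarrow> 'y \<Rightarrow> real"
  assumes jensen: "\<And>Q y. level2 Q \<Longrightarrow> ennreal (L1 (mean2 Q) y) \<le> (\<integral>\<^sup>+ \<theta>. ennreal (L1 \<theta> y) \<partial>Q)"
    and "is_minimiser (L2_of L1) ys Q"
  shows "is_minimiser (L2_of L1) ys (dirac (mean2 Q))"
proof -
  have "level2 Q" using assms(2) unfolding is_minimiser_def by simp
  then have mean: "mean2 Q \<in> prob_simplex" by (rule mean2_in_prob_simplex)
  have "L2_of L1 (dirac (mean2 Q)) y \<le> L2_of L1 Q y" for y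
    using L2_of_dirac_le[OF mean, of L1 y] jensen[OF \<open>level2 Q\<close>, of y]
    unfolding L2_of_def by simp
  then have "emp_loss (L2_of L1) (dirac (mean2 Q)) ys \<le> emp_loss (L2_of L1) Q ys"
    unfolding emp_loss_def by (intro sum_mono)
  with assms(2) level2_dirac[OF mean] show ?thesis
    unfolding is_minimiser_def using order_trans by blast
qed

lemma sum_sample_prob:
  fixes \<theta> :: "real^'y::finite"
  assumes "(\<Sum>y\<in>UNIV. \<theta> $ y) = 1"
  shows "(\<Sum>ys\<in>{ys. length ys = N}. sample_prob \<theta> ys) = 1"
proof (induction N)
  case 0
  then show ?case by (simp add: sample_prob_def)
next
  case (Suc N)
  have lists_Suc: "{ys. length ys = Suc N} = (\<lambda>(y, ys). y # ys) ` (UNIV \<times> {ys. length ys = N})"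
    by (auto simp: image_iff length_Suc_conv)
  have "inj_on (\<lambda>(y, ys). y # ys) (UNIV \<times> {ys::'y list. length ys = N})"
    by (auto simp: inj_on_def)
  then have "(\<Sum>ys\<in>{ys. length ys = Suc N}. sample_prob \<theta> ys)
      = (\<Sum>(y, ys)\<in>UNIV \<times> {ys. length ys = N}. \<theta> $ y * sample_prob \<theta> ys)"
    unfolding lists_Suc by (subst sum.reindex) (auto simp: sample_prob_def case_prod_beta)
  also have "\<dots> = (\<Sum>y\<in>UNIV. \<theta> $ y) * (\<Sum>ys\<in>{ys. length ys = N}. sample_prob \<theta> ys)"
    by (simp add: sum_product sum.cartesian_product)
  also have "\<dots> = 1" using Suc assms by simp
  finally show ?case .
qed

lemma sample_exp_const:
  assumes "\<theta> \<in> prob_simplex" and "\<And>ys. f ys = c"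
  shows "sample_exp \<theta> N f = c"
proof -
  have "sample_exp \<theta> N f = (\<Sum>ys\<in>{ys. length ys = N}. sample_prob \<theta> ys) * c"
    unfolding sample_exp_def assms(2) by (simp add: sum_distrib_right)
  with assms(1) show ?thesis unfolding prob_simplex_def by (simp add: sum_sample_prob)
qed

lemma not_cond_A1_const:
  assumes "\<theta> \<in> prob_simplex" and "\<And>ys. U (sel ys) = c"
  shows "\<not> cond_A1 U \<theta> sel"
  using sample_exp_const[of \<theta> "\<lambda>ys. U (sel ys)" c] assms unfolding cond_A1_def by simp

theorem theorem1:
  fixes L1 :: "real^'y::finite \<Rightarrow> 'y \<Rightarrow> real"
    and U :: "(real^'y) measure \<Rightarrow> real"
  assumes nonneg: "\<And>\<theta> y. \<theta> \<in> prob_simplex \<Longrightarrow> 0 \<le> L1 \<theta> y"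
    and jensen: "\<And>Q y. level2 Q \<Longrightarrow> ennreal (L1 (mean2 Q) y) \<le> (\<integral>\<^sup>+ \<theta>. ennreal (L1 \<theta> y) \<partial>Q)"
    and U: "uncertainty_measure U"
  shows "\<not> appropriate U (L2_of L1)
         \<and> (\<forall>ys Q. is_minimiser (L2_of L1) ys Q \<longrightarrow>
               (\<exists>\<theta>t\<in>prob_simplex. is_minimiser (L2_of L1) ys (dirac \<theta>t)))"
proof -
  have dirac_minimiser: "\<exists>\<theta>t\<in>prob_simplex. is_minimiser (L2_of L1) ys (dirac \<theta>t)"
    if "is_minimiser (L2_of L1) ys Q" for ys Q
    using that is_minimiser_dirac_mean2[OF jensen that] mean2_in_prob_simplex
    unfolding is_minimiser_def by blast
  moreover have "\<not> appropriate U (L2_of L1)"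
  proof
    assume app: "appropriate U (L2_of L1)"
    then obtain th where th: "\<And>ys. th ys \<in> prob_simplex \<and> is_minimiser (L2_of L1) ys (dirac (th ys))"
      using dirac_minimiser unfolding appropriate_def by metis
    obtain c where "\<forall>\<theta>\<in>prob_simplex. U (dirac \<theta>) = c"
      using U unfolding uncertainty_measure_def by blast
    with th have "U (dirac (th ys)) = c" for ys by blast
    then have "\<not> cond_A1 U (axis i 1) (\<lambda>ys. dirac (th ys))" for i
      by (intro not_cond_A1_const axis_in_prob_simplex)
    moreover have "\<forall>\<theta>\<in>prob_simplex. cond_A1 U \<theta> (\<lambda>ys. dirac (th ys))"
    proof -
      have "\<forall>ys. is_minimiser (L2_of L1) ys (dirac (th ys))" using th by blast
      with app show ?thesis
        unfolding appropriate_def by (blast dest: spec[of _ "\<lambda>ys. dirac (th ys)"])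
    qed
    ultimately show False using axis_in_prob_simplex by blast
  qed
  ultimately show ?thesis by blast
qed

end
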